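(* Let $G$ be a countable graph. The following are equivalent: (i) there exists a countable graph $G'$ such that $G$ and $G'$ are independent, i.e. $G \not\to G'$ and $G' \not\to G$; (ii) $G$ is not bipartite and $G$ does not contain $K_\omega$ as a subgraph.
   Context: All graphs are simple, undirected and loopless. A homomorphism $f: G \to G'$ is a map $V(G) \to V(G')$ such that $\{x,y\} \in E(G)$ implies $\{f(x),f(y)\} \in E(G')$. We write $G \to G'$ (or $G \le G'$) if a homomorphism exists, and $G \not\to G'$ otherwise. $K_\omega$ denotes the countably infinite complete graph. A set of graphs is independent if there is no homomorphism between any two distinct members of the set. *)

theory Defs
  imports Main "HOL-Library.Countable_Set"
begin

definition graph :: "'a set \<Rightarrow> ('a \<Rightarrow> 'a \<Rightarrow> bool) \<Rightarrow> bool" where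
  "graph V E \<longleftrightarrow> (\<forall>x y. E x y \<longrightarrow> x \<in> V \<and> y \<in> V) \<and> (\<forall>x y. E x y \<longrightarrow> E y x) \<and> (\<forall>x. \<not> E x x)"

definition countable_graph :: "'a set \<Rightarrow> ('a \<Rightarrow> 'a \<Rightarrow> bool) \<Rightarrow> bool" where
  "countable_graph V E \<longleftrightarrow> graph V E \<and> countable V"

definition is_hom :: "'a set \<Rightarrow> ('a \<Rightarrow> 'a \<Rightarrow> bool) \<Rightarrow> 'b set \<Rightarrow> ('b \<Rightarrow> 'b \<Rightarrow> bool) \<Rightarrow> ('a \<Rightarrow> 'b) \<Rightarrow> bool" where
  "is_hom V E V' E' f \<longleftrightarrow> f ` V \<subseteq> V' \<and> (\<forall>x y. E x y \<longrightarrow> E' (f x) (f y))"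

definition hom_exists :: "'a set \<Rightarrow> ('a \<Rightarrow> 'a \<Rightarrow> bool) \<Rightarrow> 'b set \<Rightarrow> ('b \<Rightarrow> 'b \<Rightarrow> bool) \<Rightarrow> bool" where
  "hom_exists V E V' E' \<longleftrightarrow> (\<exists>f. is_hom V E V' E' f)"

definition bipartite :: "'a set \<Rightarrow> ('a \<Rightarrow> 'a \<Rightarrow> bool) \<Rightarrow> bool" where
  "bipartite V E \<longleftrightarrow> (\<exists>A B. A \<union> B = V \<and> A \<inter> B = {} \<and>
      (\<forall>x y. E x y \<longrightarrow> (x \<in> A \<and> y \<in> B) \<or> (x \<in> B \<and> y \<in> A)))"

definition contains_K_omega :: "'a set \<Rightarrow> ('a \<Rightarrow> 'a \<Rightarrow> bool) \<Rightarrow> bool" where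
  "contains_K_omega V E \<longleftrightarrow> (\<exists>f :: nat \<Rightarrow> 'a. inj f \<and> range f \<subseteq> V \<and> (\<forall>i j. i \<noteq> j \<longrightarrow> E (f i) (f j)))"

end

theory Submission
  imports Defs "HOL-Library.Ramsey" "HOL-Library.Sublist"
begin

text \<open>A bipartite G is comparable with every graph: it maps into any graph with an edge, and
  an edgeless graph maps into G unless G is empty. If G contains K_omega, every countable
  graph maps into G. Conversely, let G be non-bipartite, with an odd closed walk of length L,
  and free of K_omega. The shift graph on increasing (2L+1)-tuples has no closed walk of
  length L, so G does not map into it, and we are done unless it maps into G. In that case
  take the comparability graph T of the tree of finite cliques of G. A homomorphism from T
  to G builds a K_omega greedily, while one from G to T would give one from the shift graph
  to T, which Ramsey's theorem turns into an infinite branch of T, again a K_omega.\<close>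

section \<open>Homomorphisms and odd closed walks\<close>

lemma is_hom_comp:
  "is_hom V E V' E' f \<Longrightarrow> is_hom V' E' V'' E'' g \<Longrightarrow> is_hom V E V'' E'' (g \<circ> f)"
  unfolding is_hom_def image_subset_iff by auto

lemma hom_exists_trans:
  "hom_exists V E V' E' \<Longrightarrow> hom_exists V' E' V'' E'' \<Longrightarrow> hom_exists V E V'' E''"
  unfolding hom_exists_def using is_hom_comp by blast

lemma is_hom_relpowp:
  assumes "is_hom V E V' E' f" and "(E ^^ n) x y"
  shows "(E' ^^ n) (f x) (f y)"
  using assms(2)
proof (induction n arbitrary: y)
  case 0
  then show ?case by simp
next
  case (Suc n)
  then obtain z where "(E ^^ n) x z" and "E z y"
    by (auto elim: relpowp_Suc_E)
  with Suc.IH assms(1) show ?case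
    unfolding is_hom_def by (metis relpowp_Suc_I)
qed

lemma relpowp_sym:
  assumes sym: "\<And>x y. E x y \<Longrightarrow> E y x" and "(E ^^ n) x y"
  shows "(E ^^ n) y x"
  using assms(2)
proof (induction n arbitrary: y)
  case 0
  then show ?case by simp
next
  case (Suc n)
  then obtain z where "(E ^^ n) x z" and "E z y"
    by (auto elim: relpowp_Suc_E)
  with Suc.IH sym show ?case
    by (metis relpowp_Suc_I2)
qed

text \<open>Colour each vertex by the parity of a walk to it from a fixed root of its component;
  without odd closed walks this parity is well defined.\<close>
lemma bipartite_if_closed_walks_even:
  assumes graph: "graph V E" and even_closed: "\<And>n x. (E ^^ n) x x \<Longrightarrow> even n"
  shows "bipartite V E"
proof -
  have sym: "E x y \<Longrightarrow> E y x" for x y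
    using graph unfolding graph_def by blast
  have parity: "even (a + k + b)"
    if "(E ^^ a) u x" "(E ^^ k) x y" "(E ^^ b) u y" for a k b u x y
    using even_closed relpowp_trans[OF relpowp_trans[OF that(1,2)] relpowp_sym[OF sym that(3)]]
    by blast
  define root where "root v = (SOME u. \<exists>n. (E ^^ n) u v)" for v
  have root: "\<exists>n. (E ^^ n) (root v) v" for v
    unfolding root_def by (rule someI_ex) (use relpowp_0_I[of E v] in blast)
  have reach_edge: "\<exists>n. (E ^^ n) u y" if "(E ^^ n) u x" "E x y" for u x y n
    using relpowp_Suc_I[OF that] by blast
  have root_edge: "root x = root y" if "E x y" for x y
  proof -
    have "(\<exists>n. (E ^^ n) u x) \<longleftrightarrow> (\<exists>n. (E ^^ n) u y)" for u
      using reach_edge that sym by blast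
    then show ?thesis
      unfolding root_def by simp
  qed
  define A where "A = {v \<in> V. \<exists>n. even n \<and> (E ^^ n) (root v) v}"
  have in_A_iff: "x \<in> A \<longleftrightarrow> even a" if "x \<in> V" and a: "(E ^^ a) (root x) x" for x a
  proof
    assume "x \<in> A"
    then obtain n where "even n" "(E ^^ n) (root x) x"
      unfolding A_def by blast
    with parity[OF this(2) relpowp_0_I a] show "even a"
      by simp
  qed (use that in \<open>auto simp: A_def\<close>)
  have in_A_edge: "x \<in> A \<longleftrightarrow> y \<notin> A" if "E x y" for x y
  proof -
    obtain a b where a: "(E ^^ a) (root x) x" and b: "(E ^^ b) (root y) y"
      using root by blast
    have "x \<in> V" "y \<in> V"
      using graph that unfolding graph_def by auto
    moreover have "even (a + 1 + b)"
      using parity[OF a _ b[folded root_edge[OF that]], of 1] that by (simp del: relpowp.simps)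
    ultimately show ?thesis
      using in_A_iff[OF _ a] in_A_iff[OF _ b] by auto
  qed
  have "E x y \<Longrightarrow> x \<in> V \<and> y \<in> V" for x y
    using graph unfolding graph_def by auto
  then show ?thesis
    unfolding bipartite_def
    by (intro exI[of _ A] exI[of _ "V - A"]) (use in_A_edge in \<open>auto simp: A_def\<close>)
qed

lemma bipartite_hom_comparable:
  assumes "bipartite V E" and "graph V E" and "graph V' E'"
  shows "hom_exists V E V' E' \<or> hom_exists V' E' V E"
proof (cases "\<exists>x y. E' x y")
  case True
  then obtain x y where xy: "E' x y"
    by blast
  obtain A B where "A \<union> B = V" "A \<inter> B = {}"
    and AB: "\<forall>u v. E u v \<longrightarrow> u \<in> A \<and> v \<in> B \<or> u \<in> B \<and> v \<in> A"
    using assms(1) unfolding bipartite_def by blast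
  then have "E u v \<Longrightarrow> u \<in> A \<longleftrightarrow> v \<notin> A" for u v
    by blast
  then have "is_hom V E V' E' (\<lambda>v. if v \<in> A then x else y)"
    using xy assms(3) unfolding is_hom_def graph_def by auto
  then show ?thesis
    unfolding hom_exists_def by blast
next
  case False
  then have "is_hom V' E' V E (\<lambda>_. v)" if "v \<in> V" for v
    using that unfolding is_hom_def by auto
  moreover have "is_hom {} E V' E' f" if "graph {} E" for f
    using that unfolding is_hom_def graph_def by auto
  ultimately show ?thesis
    using assms(2) unfolding hom_exists_def by (cases "V = {}") auto
qed

lemma hom_into_K_omega:
  assumes "contains_K_omega V E" and "countable_graph V' E'"
  shows "hom_exists V' E' V E"
proof -
  obtain k :: "nat \<Rightarrow> 'a" where "range k \<subseteq> V" and "\<forall>i j. i \<noteq> j \<longrightarrow> E (k i) (k j)"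
    using assms(1) unfolding contains_K_omega_def by blast
  moreover have "to_nat_on V' x \<noteq> to_nat_on V' y" if "E' x y" for x y
    using assms(2) that inj_on_to_nat_on unfolding countable_graph_def graph_def inj_on_def
    by metis
  ultimately have "is_hom V' E' V E (k \<circ> to_nat_on V')"
    unfolding is_hom_def by auto
  then show ?thesis
    unfolding hom_exists_def by blast
qed

section \<open>Shift graphs\<close>

definition shift_vertices :: "nat \<Rightarrow> nat list set" where
  "shift_vertices m = {xs. length xs = m \<and> sorted_wrt (<) xs}"

definition shift_edge :: "nat \<Rightarrow> nat list \<Rightarrow> nat list \<Rightarrow> bool" where
  "shift_edge m u v \<longleftrightarrow> u \<in> shift_vertices m \<and> v \<in> shift_vertices m \<and>
     (tl u = butlast v \<or> tl v = butlast u)"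

lemma shift_vertices_distinct: "xs \<in> shift_vertices m \<Longrightarrow> distinct xs"
  unfolding shift_vertices_def by (simp add: strict_sorted_iff)

lemma shift_edge_butlast_tl:
  assumes "z \<in> shift_vertices (Suc m)"
  shows "shift_edge m (butlast z) (tl z)"
proof -
  have "butlast z \<in> shift_vertices m"
    using assms unfolding shift_vertices_def by (cases z rule: rev_cases) (auto simp: sorted_wrt_append)
  moreover have "tl z \<in> shift_vertices m"
    using assms unfolding shift_vertices_def by (cases z) auto
  ultimately show ?thesis
    unfolding shift_edge_def by (simp add: butlast_tl)
qed

lemma countable_graph_shift:
  assumes "2 \<le> m"
  shows "countable_graph (shift_vertices m) (shift_edge m)"
proof -
  have "\<not> shift_edge m u u" for u
  proof
    assume "shift_edge m u u"
    then have len: "length u = m" and "sorted_wrt (<) u" and tl: "tl u = butlast u"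
      unfolding shift_edge_def shift_vertices_def by auto
    then have "u ! 0 < u ! 1"
      using assms sorted_wrt_nth_less by fastforce
    moreover have "u ! 1 = u ! 0"
      using nth_tl[of 0 u] nth_butlast[of 0 u] len assms by (simp add: tl)
    ultimately show False
      by simp
  qed
  then show ?thesis
    unfolding countable_graph_def graph_def shift_edge_def by auto
qed

text \<open>Along an edge every entry that survives moves by one position.\<close>
lemma shift_walk_tracks_entry:
  assumes "(shift_edge m ^^ n) u v" and "n \<le> i" and "i + n < m"
  shows "\<exists>j. v ! j = u ! i \<and> i \<le> j + n \<and> j \<le> i + n \<and> even (i + j + n)"
  using assms
proof (induction n arbitrary: v)
  case 0
  then show ?case by auto
next
  case (Suc n)
  from Suc.prems(1) obtain w where walk: "(shift_edge m ^^ n) u w" and edge: "shift_edge m w v"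
    by (rule relpowp_Suc_E)
  obtain j where j: "w ! j = u ! i" "i \<le> j + n" "j \<le> i + n" "even (i + j + n)"
    using Suc.IH[OF walk] Suc.prems by auto
  have len: "length w = m" "length v = m"
    using edge unfolding shift_edge_def shift_vertices_def by auto
  from edge consider "tl w = butlast v" | "tl v = butlast w"
    unfolding shift_edge_def by blast
  then show ?case
  proof cases
    case 1
    have "v ! (j - 1) = butlast v ! (j - 1)"
      using len j Suc.prems by (simp add: nth_butlast)
    also have "\<dots> = w ! j"
      using 1 len j Suc.prems by (simp flip: 1 add: nth_tl)
    finally show ?thesis
      using j Suc.prems by (intro exI[of _ "j - 1"]) auto
  next
    case 2
    have "v ! (j + 1) = tl v ! j"
      using len j Suc.prems by (simp add: nth_tl)
    also have "\<dots> = w ! j"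
      using 2 len j Suc.prems by (simp add: nth_butlast)
    finally show ?thesis
      using j Suc.prems by (intro exI[of _ "j + 1"]) auto
  qed
qed

lemma shift_no_odd_closed_walk:
  assumes "odd L"
  shows "\<not> (shift_edge (2 * L + 1) ^^ L) u u"
proof
  assume walk: "(shift_edge (2 * L + 1) ^^ L) u u"
  then obtain j where j: "u ! j = u ! L" "j \<le> 2 * L" "even j"
    using shift_walk_tracks_entry[OF walk, of L] by (force simp: mult_2)
  obtain L' where "L = Suc L'"
    using assms by (cases L) auto
  with walk obtain v where "shift_edge (2 * L + 1) v u"
    by (metis relpowp_Suc_E)
  then have "distinct u" "length u = 2 * L + 1"
    using shift_vertices_distinct unfolding shift_edge_def shift_vertices_def by auto
  moreover have "j \<noteq> L"
    using j(3) assms by auto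
  ultimately show False
    using j(1,2) nth_eq_iff_index_eq[of u j L] by auto
qed

lemma shift_vertex_above:
  assumes "infinite Y"
  obtains x where "x \<in> shift_vertices m" "set x \<subseteq> Y" "\<forall>a\<in>set x. N < a"
proof -
  have "infinite (Y - {..N})"
    using assms by (simp add: Diff_infinite_finite)
  then obtain X where "finite X" "card X = m" "X \<subseteq> Y - {..N}"
    using infinite_arbitrarily_large by blast
  then show thesis
    by (intro that[of "sorted_list_of_set X"]) (auto simp: shift_vertices_def)
qed

text \<open>The shift graph on an infinite Y is connected: a vertex slides, one entry at a time,
  to any vertex lying above it.\<close>
lemma shift_invariant_constant:
  assumes "infinite Y"
    and inv: "\<And>u v. shift_edge m u v \<Longrightarrow> set u \<subseteq> Y \<Longrightarrow> set v \<subseteq> Y \<Longrightarrow> h u = h v"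
    and u: "u \<in> shift_vertices m" "set u \<subseteq> Y" and v: "v \<in> shift_vertices m" "set v \<subseteq> Y"
  shows "h u = h v"
proof -
  have slide: "h x = h z"
    if x: "x \<in> shift_vertices m" "set x \<subseteq> Y" and z: "z \<in> shift_vertices m" "set z \<subseteq> Y"
      and below: "\<forall>a\<in>set x. \<forall>b\<in>set z. a < b" for x z
  proof -
    have len: "length x = m" "length z = m"
      using x z unfolding shift_vertices_def by auto
    define w where "w k = drop k x @ take k z" for k
    have w: "w k \<in> shift_vertices m" "set (w k) \<subseteq> Y" if "k \<le> m" for k
      using that x z below len unfolding w_def shift_vertices_def
      by (auto simp: sorted_wrt_append dest!: in_set_dropD in_set_takeD)
    have "h x = h (w k)" if "k \<le> m" for k
      using that
    proof (induction k)
      case 0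
      then show ?case by (simp add: w_def)
    next
      case (Suc k)
      moreover have "z \<noteq> []"
        using Suc.prems len by auto
      ultimately have "tl (w k) = butlast (w (Suc k))"
        using len unfolding w_def by (simp add: butlast_append butlast_take tl_drop drop_Suc)
      then have "shift_edge m (w k) (w (Suc k))"
        using w[of k] w[of "Suc k"] Suc.prems unfolding shift_edge_def by auto
      then show ?case
        using Suc w[of k] w[of "Suc k"] inv by auto
    qed
    from this[of m] show ?thesis
      using len by (simp add: w_def)
  qed
  obtain z where z: "z \<in> shift_vertices m" "set z \<subseteq> Y" "\<forall>b\<in>set z. Max (set u \<union> set v) < b"
    using assms(1) by (rule shift_vertex_above)
  have "a < b" if "a \<in> set u \<union> set v" "b \<in> set z" for a b
    using le_less_trans[OF Max_ge[of "set u \<union> set v" a]] z(3) that by simp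
  then have "h u = h z" "h v = h z"
    using slide[OF u z(1,2)] slide[OF v z(1,2)] by simp_all
  then show ?thesis
    by simp
qed

section \<open>The tree of finite cliques\<close>

text \<open>The comparability graph of the tree of enumerated finite cliques of a graph;
  its infinite branches are the copies of K_omega.\<close>
definition clique_lists :: "'a set \<Rightarrow> ('a \<Rightarrow> 'a \<Rightarrow> bool) \<Rightarrow> 'a list set" where
  "clique_lists V E =
     {s. set s \<subseteq> V \<and> distinct s \<and> (\<forall>x\<in>set s. \<forall>y\<in>set s. x \<noteq> y \<longrightarrow> E x y)}"

definition clique_tree :: "'a set \<Rightarrow> ('a \<Rightarrow> 'a \<Rightarrow> bool) \<Rightarrow> 'a list \<Rightarrow> 'a list \<Rightarrow> bool" where
  "clique_tree V E s t \<longleftrightarrow> s \<in> clique_lists V E \<and> t \<in> clique_lists V E \<and>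
     (strict_prefix s t \<or> strict_prefix t s)"

lemma clique_lists_prefix: "prefix s t \<Longrightarrow> t \<in> clique_lists V E \<Longrightarrow> s \<in> clique_lists V E"
  unfolding clique_lists_def by (auto elim!: prefixE)

lemma countable_graph_clique_tree:
  "countable V \<Longrightarrow> countable_graph (clique_lists V E) (clique_tree V E)"
  unfolding countable_graph_def graph_def clique_tree_def
  by (auto intro: countable_subset[OF _ countable_lists] simp: clique_lists_def)

lemma snoc_chain_strict_prefix:
  assumes "\<And>n. \<exists>c. T (Suc n) = T n @ [c]" and "i < n"
  shows "strict_prefix (T i) (T n)"
  using assms(2)
proof (induction n)
  case 0
  then show ?case by simp
next
  case (Suc n)
  obtain c where "T (Suc n) = T n @ [c]"
    using assms(1) by blast
  with Suc show ?case
    by (cases "i = n") (auto simp: strict_prefix_def)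
qed

lemma K_omega_if_clique_chain:
  assumes cliques: "\<And>n. T n \<in> clique_lists V E"
    and snoc: "\<And>n. \<exists>c. T (Suc n) = T n @ [c]" and "T 0 = []"
  shows "contains_K_omega V E"
proof -
  have len: "length (T n) = n" for n
  proof (induction n)
    case (Suc n)
    obtain c where "T (Suc n) = T n @ [c]"
      using snoc by blast
    with Suc show ?case
      by simp
  qed (simp add: assms(3))
  define k where "k i = T (Suc i) ! i" for i
  have k_nth: "T n ! i = k i" if "i < n" for i n
  proof (cases "Suc i = n")
    case False
    with that have "strict_prefix (T (Suc i)) (T n)"
      using snoc_chain_strict_prefix[where T = T, OF snoc] by simp
    then obtain r where "T n = T (Suc i) @ r"
      unfolding strict_prefix_def prefix_def by blast
    then show ?thesis
      unfolding k_def using len by (simp add: nth_append)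
  qed (simp add: k_def)
  have "k i \<noteq> k j \<and> k i \<in> V \<and> E (k i) (k j)" if "i \<noteq> j" for i j
  proof -
    define n where "n = Suc (max i j)"
    have "i < length (T n)" "j < length (T n)"
      unfolding n_def len by auto
    then have "k i \<in> set (T n)" "k j \<in> set (T n)" "k i \<noteq> k j"
      using k_nth[of i n] k_nth[of j n] cliques[of n] nth_eq_iff_index_eq[of "T n" i j] that
      unfolding clique_lists_def by (auto simp: len simp flip: k_nth)
    then show ?thesis
      using cliques[of n] unfolding clique_lists_def by auto
  qed
  then have "inj k" "range k \<subseteq> V" "\<forall>i j. i \<noteq> j \<longrightarrow> E (k i) (k j)"
    by (auto intro: injI) (metis Suc_n_not_n)
  then show ?thesis
    unfolding contains_K_omega_def by blast
qed

text \<open>Greedily extending the empty clique by the image of the current clique yields a K_omega.\<close>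
lemma clique_tree_hom_imp_K_omega:
  assumes graph: "graph V E" and f: "is_hom (clique_lists V E) (clique_tree V E) V E f"
  shows "contains_K_omega V E"
proof -
  define T where "T n = ((\<lambda>s. s @ [f s]) ^^ n) []" for n
  have T_0: "T 0 = []" and T_Suc: "T (Suc n) = T n @ [f (T n)]" for n
    unfolding T_def by simp_all
  have set_T: "set (T n) = (\<lambda>i. f (T i)) ` {..<n}" for n
    by (induction n) (simp_all add: T_0 T_Suc lessThan_Suc)
  have "T n \<in> clique_lists V E" for n
  proof (induction n)
    case 0
    then show ?case by (simp add: T_0 clique_lists_def)
  next
    case (Suc n)
    have "E (f (T i)) (f (T n))" if "i < n" for i
    proof -
      have "strict_prefix (T i) (T n)"
        using snoc_chain_strict_prefix[of T, OF _ that] T_Suc by blast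
      with Suc.IH have "clique_tree V E (T i) (T n)"
        unfolding clique_tree_def by (blast intro: clique_lists_prefix prefix_order.less_imp_le)
      with f show ?thesis
        unfolding is_hom_def by blast
    qed
    then have "\<forall>y\<in>set (T n). E y (f (T n))"
      unfolding set_T by blast
    moreover have "f (T n) \<in> V"
      using f Suc.IH unfolding is_hom_def by blast
    moreover have "\<not> E y y" and "E x y \<Longrightarrow> E y x" for x y
      using graph unfolding graph_def by blast+
    ultimately show ?case
      using Suc.IH unfolding T_Suc clique_lists_def by auto
  qed
  with T_0 T_Suc show ?thesis
    by (intro K_omega_if_clique_chain[of T]) auto
qed

lemma shift_vertices_Ramsey:
  assumes "infinite B"
  obtains Y where "Y \<subseteq> B" and "infinite Y"
    and "(\<forall>x\<in>shift_vertices m. set x \<subseteq> Y \<longrightarrow> P x) \<or>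
      (\<forall>x\<in>shift_vertices m. set x \<subseteq> Y \<longrightarrow> \<not> P x)"
proof -
  define col where "col X = (if P (sorted_list_of_set X) then 0 else 1 :: nat)" for X
  have "\<forall>X. X \<subseteq> B \<and> finite X \<and> card X = m \<longrightarrow> col X < 2"
    unfolding col_def by simp
  from Ramsey[OF assms this] obtain Y k where "Y \<subseteq> B" "infinite Y"
    and mono: "\<forall>X. X \<subseteq> Y \<and> finite X \<and> card X = m \<longrightarrow> col X = k"
    by blast
  have "P x \<longleftrightarrow> k = 0" if "x \<in> shift_vertices m" "set x \<subseteq> Y" for x
  proof -
    have "sorted x" "distinct x" "length x = m"
      using that(1) unfolding shift_vertices_def by (simp_all add: strict_sorted_iff)
    then have "sorted_list_of_set (set x) = x" "card (set x) = m"
      by (simp_all add: sorted_list_of_set.idem_if_sorted_distinct distinct_card)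
    moreover have "col (set x) = k"
      using mono that(2) \<open>card (set x) = m\<close> by blast
    ultimately show ?thesis
      unfolding col_def by (simp split: if_splits)
  qed
  with \<open>Y \<subseteq> B\<close> \<open>infinite Y\<close> show thesis
    by (intro that) blast+
qed

lemma shift_hom_clique_tree_nonconstant:
  assumes f: "is_hom (shift_vertices m) (shift_edge m) (clique_lists V E) (clique_tree V E) f"
    and "infinite Y"
  shows "\<exists>x\<in>shift_vertices m. set x \<subseteq> Y \<and> f x \<noteq> t"
proof -
  obtain z where z: "z \<in> shift_vertices (Suc m)" "set z \<subseteq> Y"
    using \<open>infinite Y\<close> by (rule shift_vertex_above)
  have edge: "shift_edge m (butlast z) (tl z)"
    using z(1) by (rule shift_edge_butlast_tl)
  then have "clique_tree V E (f (butlast z)) (f (tl z))"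
    using f unfolding is_hom_def by blast
  then have "f (butlast z) \<noteq> t \<or> f (tl z) \<noteq> t"
    unfolding clique_tree_def by auto
  moreover have "set (butlast z) \<subseteq> Y" "set (tl z) \<subseteq> Y"
    using z(2) by (auto dest: in_set_butlastD) (cases z; auto)
  ultimately show ?thesis
    using edge unfolding shift_edge_def by blast
qed

text \<open>Ramsey's theorem yields an infinite Y on which all images properly extend t; the entry
  following t is then constant along edges, hence constant.\<close>
lemma shift_hom_clique_tree_extend:
  assumes f: "is_hom (shift_vertices m) (shift_edge m) (clique_lists V E) (clique_tree V E) f"
    and "infinite B" and B: "\<forall>x\<in>shift_vertices m. set x \<subseteq> B \<longrightarrow> prefix t (f x)"
  shows "\<exists>B' c. infinite B' \<and> (\<forall>x\<in>shift_vertices m. set x \<subseteq> B' \<longrightarrow> prefix (t @ [c]) (f x))"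
proof -
  obtain Y where "Y \<subseteq> B" and "infinite Y"
    and "(\<forall>x\<in>shift_vertices m. set x \<subseteq> Y \<longrightarrow> f x = t) \<or>
      (\<forall>x\<in>shift_vertices m. set x \<subseteq> Y \<longrightarrow> f x \<noteq> t)"
    using \<open>infinite B\<close> by (rule shift_vertices_Ramsey)
  then have not_t: "\<forall>x\<in>shift_vertices m. set x \<subseteq> Y \<longrightarrow> f x \<noteq> t"
    using shift_hom_clique_tree_nonconstant[OF f \<open>infinite Y\<close>, of t] by blast
  have extends: "\<exists>c r. f x = t @ c # r" if x: "x \<in> shift_vertices m" "set x \<subseteq> Y" for x
  proof -
    have "prefix t (f x)" and "f x \<noteq> t"
      using B not_t x \<open>Y \<subseteq> B\<close> by blast+
    then obtain r where "f x = t @ r" "r \<noteq> []"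
      unfolding prefix_def by auto
    then show ?thesis
      by (cases r) auto
  qed
  have next_edge: "f u ! length t = f v ! length t"
    if edge: "shift_edge m u v" and in_Y: "set u \<subseteq> Y" "set v \<subseteq> Y" for u v
  proof -
    have "u \<in> shift_vertices m" "v \<in> shift_vertices m"
      using edge unfolding shift_edge_def by auto
    then obtain cu ru cv rv where "f u = t @ cu # ru" "f v = t @ cv # rv"
      using extends in_Y by meson
    moreover have "prefix (f u) (f v) \<or> prefix (f v) (f u)"
      using f edge unfolding is_hom_def clique_tree_def strict_prefix_def by blast
    ultimately show ?thesis
      by auto
  qed
  obtain x0 where x0: "x0 \<in> shift_vertices m" "set x0 \<subseteq> Y"
    using \<open>infinite Y\<close> by (rule shift_vertex_above)
  have "prefix (t @ [f x0 ! length t]) (f x)" if x: "x \<in> shift_vertices m" "set x \<subseteq> Y" for x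
  proof -
    obtain c r where "f x = t @ c # r"
      using extends[OF x] by blast
    moreover have "f x ! length t = f x0 ! length t"
      by (rule shift_invariant_constant[OF \<open>infinite Y\<close> next_edge x x0])
    ultimately show ?thesis
      by simp
  qed
  with \<open>infinite Y\<close> show ?thesis
    by blast
qed

lemma shift_hom_clique_tree_imp_K_omega:
  assumes f: "is_hom (shift_vertices m) (shift_edge m) (clique_lists V E) (clique_tree V E) f"
  shows "contains_K_omega V E"
proof -
  define good where "good n p \<longleftrightarrow> infinite (fst p) \<and> length (snd p) = n \<and>
      (\<forall>x\<in>shift_vertices m. set x \<subseteq> fst p \<longrightarrow> prefix (snd p) (f x))"
    for n and p :: "nat set \<times> 'a list"
  have "\<exists>p'. good (Suc n) p' \<and> (\<exists>c. snd p' = snd p @ [c])" if "good n p" for n p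
  proof -
    from that have "infinite (fst p)"
      and "\<forall>x\<in>shift_vertices m. set x \<subseteq> fst p \<longrightarrow> prefix (snd p) (f x)"
      unfolding good_def by simp_all
    from shift_hom_clique_tree_extend[OF f this] obtain B' c where "infinite B'"
      and "\<forall>x\<in>shift_vertices m. set x \<subseteq> B' \<longrightarrow> prefix (snd p @ [c]) (f x)"
      by blast
    with that show ?thesis
      unfolding good_def by (intro exI[of _ "(B', snd p @ [c])"]) auto
  qed
  moreover have "good 0 (UNIV, [])"
    unfolding good_def by simp
  ultimately obtain S where S: "\<And>n. good n (S n) \<and> (\<exists>c. snd (S (Suc n)) = snd (S n) @ [c])"
    using dependent_nat_choice[of good "\<lambda>_ p p'. \<exists>c. snd p' = snd p @ [c]"] by blast
  have "snd (S n) \<in> clique_lists V E" for n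
  proof -
    have "infinite (fst (S n))"
      using S[of n] unfolding good_def by simp
    then obtain x where x: "x \<in> shift_vertices m" "set x \<subseteq> fst (S n)"
      by (rule shift_vertex_above)
    then have "prefix (snd (S n)) (f x)"
      using S[of n] unfolding good_def by simp
    moreover have "f x \<in> clique_lists V E"
      using f x(1) unfolding is_hom_def by blast
    ultimately show ?thesis
      by (rule clique_lists_prefix)
  qed
  moreover have "snd (S 0) = []"
    using S[of 0] unfolding good_def by simp
  ultimately show ?thesis
    using S by (intro K_omega_if_clique_chain[of "\<lambda>n. snd (S n)"]) auto
qed

section \<open>Independent countable graphs\<close>

lemma countable_graph_nat_copy:
  assumes "countable_graph W F"
  obtains V' :: "nat set" and E' where "countable_graph V' E'"
    and "hom_exists W F V' E'" and "hom_exists V' E' W F"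
proof -
  have graph: "graph W F" and "countable W"
    using assms unfolding countable_graph_def by auto
  define V' where "V' = to_nat_on W ` W"
  define E' where "E' i j \<longleftrightarrow> i \<in> V' \<and> j \<in> V' \<and> F (from_nat_into W i) (from_nat_into W j)" for i j
  have from_to_nat: "from_nat_into W (to_nat_on W a) = a" if "a \<in> W" for a
    using from_nat_into_to_nat_on[OF \<open>countable W\<close> that] .
  have "countable_graph V' E'"
    using graph unfolding countable_graph_def graph_def E'_def V'_def by auto
  moreover have "is_hom W F V' E' (to_nat_on W)"
    using graph from_to_nat unfolding is_hom_def graph_def E'_def V'_def by auto
  moreover have "is_hom V' E' W F (from_nat_into W)"
    using from_to_nat unfolding is_hom_def E'_def V'_def by auto
  ultimately show thesis
    using that unfolding hom_exists_def by blast
qed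

lemma independent_nat_graph_if_independent:
  assumes "countable_graph W F" and "\<not> hom_exists V E W F" and "\<not> hom_exists W F V E"
  shows "\<exists>(V' :: nat set) E'. countable_graph V' E' \<and>
           \<not> hom_exists V E V' E' \<and> \<not> hom_exists V' E' V E"
proof -
  obtain V' :: "nat set" and E' where "countable_graph V' E'"
    and "hom_exists W F V' E'" and "hom_exists V' E' W F"
    using assms(1) by (rule countable_graph_nat_copy)
  with assms(2,3) hom_exists_trans[of V E V' E' W F] hom_exists_trans[of W F V' E' V E]
  show ?thesis
    by blast
qed

lemma independent_graph_exists:
  assumes "countable_graph V E" and "\<not> bipartite V E" and "\<not> contains_K_omega V E"
  shows "\<exists>(V' :: nat set) E'. countable_graph V' E' \<and>
           \<not> hom_exists V E V' E' \<and> \<not> hom_exists V' E' V E"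
proof -
  have graph: "graph V E" and "countable V"
    using assms(1) unfolding countable_graph_def by auto
  obtain L x where "odd L" and cycle: "(E ^^ L) x x"
    using bipartite_if_closed_walks_even[OF graph] assms(2) by blast
  define m where "m = 2 * L + 1"
  have "2 \<le> m"
    using \<open>odd L\<close> unfolding m_def by presburger
  have not_to_shift: "\<not> hom_exists V E (shift_vertices m) (shift_edge m)"
    using is_hom_relpowp[OF _ cycle] shift_no_odd_closed_walk[OF \<open>odd L\<close>]
    unfolding hom_exists_def m_def by blast
  show ?thesis
  proof (cases "hom_exists (shift_vertices m) (shift_edge m) V E")
    case False
    with not_to_shift show ?thesis
      by (intro independent_nat_graph_if_independent[OF countable_graph_shift[OF \<open>2 \<le> m\<close>]])
  next
    case True
    have "\<not> hom_exists (clique_lists V E) (clique_tree V E) V E"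
      using clique_tree_hom_imp_K_omega[OF graph] assms(3) unfolding hom_exists_def by blast
    moreover have "\<not> hom_exists V E (clique_lists V E) (clique_tree V E)"
      using hom_exists_trans[OF True] shift_hom_clique_tree_imp_K_omega assms(3)
      unfolding hom_exists_def by blast
    ultimately show ?thesis
      by (intro independent_nat_graph_if_independent[OF countable_graph_clique_tree[OF \<open>countable V\<close>]])
  qed
qed

theorem theorem1:
  fixes V :: "'a set" and E :: "'a \<Rightarrow> 'a \<Rightarrow> bool"
  assumes "countable_graph V E"
  shows "(\<exists>(V' :: nat set) E'. countable_graph V' E' \<and>
            \<not> hom_exists V E V' E' \<and> \<not> hom_exists V' E' V E)
         \<longleftrightarrow> (\<not> bipartite V E \<and> \<not> contains_K_omega V E)"
proof
  assume "\<exists>(V' :: nat set) E'. countable_graph V' E' \<and>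
            \<not> hom_exists V E V' E' \<and> \<not> hom_exists V' E' V E"
  then obtain V' :: "nat set" and E' where "countable_graph V' E'"
    and "\<not> hom_exists V E V' E'" and "\<not> hom_exists V' E' V E"
    by blast
  with assms show "\<not> bipartite V E \<and> \<not> contains_K_omega V E"
    using bipartite_hom_comparable hom_into_K_omega unfolding countable_graph_def by blast
next
  assume "\<not> bipartite V E \<and> \<not> contains_K_omega V E"
  with assms show "\<exists>(V' :: nat set) E'. countable_graph V' E' \<and>
            \<not> hom_exists V E V' E' \<and> \<not> hom_exists V' E' V E"
    using independent_graph_exists by blast
qed

end
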